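(* Assume (H$_G$). Let $\alpha\in U$ and $\xi>0$, and set $\gamma=\alpha^{\nu-1}/\xi$. For each integer $d\ge\nu-1$ define the partial sum $$\mathcal G^{(d)}:=\alpha\sum_{j=0}^{\lfloor\frac{d-\nu+1}{2\nu}\rfloor}\ \sum_{i=\nu-1}^{d-2j\nu}\frac{a_{i,j,\nu}(\gamma)}{n^{2j+i/\nu}}.$$ Then for every $d\ge\nu-1$ there is a constant $K_{3,d}(\alpha,\gamma)$ such that, for all sufficiently large $n$, $$\Big|x_{n,\frac n\alpha,\frac{n^{\nu-1}}{\xi}}-\mathcal G^{(d)}\Big|<\frac{K_{3,d}(\alpha,\gamma)}{n^{(d+1)/\nu}}.$$
   Context: Fix an integer $\nu\ge2$. For $N,r>0$ let $w_{N,r}(\lambda)=\exp[-N(\lambda^2/2+r\lambda^{2\nu}/(2\nu))]$, and let $x_{n,N,r}=b_n^2$ be the recurrence coefficients of the monic orthogonal polynomials: $\lambda\pi_n=\pi_{n+1}+b_n^2\pi_{n-1}$. Let $c_\nu=\binom{2\nu-1}{\nu-1}$. For $y\ge0$ let $Z_0(y)$ be the unique root in $(0,1]$ of $1=Z+c_\nu yZ^\nu$. For $g\ge1$ set $$Z_g(y)=\frac{Z_0(y)(Z_0(y)-1)P_{3g-2,\nu}(Z_0(y))}{(\nu-(\nu-1)Z_0(y))^{5g-1}},$$ where the $P_{3g-2,\nu}$ are fixed real polynomials of degree $3g-2$. For fixed $\gamma>0$, $Z_g(\gamma n^{\nu-1})$ has a convergent expansion for large $n$ of the form $$Z_g(\gamma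 n^{\nu-1})=\sum_{i\ge\nu-1}a_{i,g,\nu}(\gamma)\,n^{-i/\nu};$$ this defines the coefficients $a_{i,g,\nu}(\gamma)$. Hypothesis (H$_G$): there is a neighborhood $U$ of $1$ such that for each $\alpha\in U$ and each integer $m\ge0$ there exist $K_{1,m}(\alpha)$ and $n_0$ such that, for all $n\ge n_0$ and all $r>0$, $$\Big|x_{n,n/\alpha,r}-\alpha\sum_{g=0}^m\frac{Z_g(\alpha^{\nu-1}r)}{n^{2g}}\Big|<\frac{K_{1,m}(\alpha)}{n^{2m+2}}.$$ *)

theory Defs
  imports "HOL-Analysis.Analysis" "HOL-Computational_Algebra.Polynomial"
begin

definition wgt :: "nat \<Rightarrow> real \<Rightarrow> real \<Rightarrow> real \<Rightarrow> real" where
  "wgt \<nu> N r t = exp (- N * (t^2 / 2 + r * t^(2*\<nu>) / (2 * real \<nu>)))"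

definition monic_OPs :: "nat \<Rightarrow> real \<Rightarrow> real \<Rightarrow> (nat \<Rightarrow> real poly) \<Rightarrow> bool" where
  "monic_OPs \<nu> N r \<pi> \<longleftrightarrow>
     (\<forall>k. degree (\<pi> k) = k \<and> lead_coeff (\<pi> k) = 1 \<and>
          (\<forall>j<k. (LINT t|lborel. poly (\<pi> k) t * t^j * wgt \<nu> N r t) = 0))"

definition xrec :: "nat \<Rightarrow> nat \<Rightarrow> real \<Rightarrow> real \<Rightarrow> real" where
  "xrec \<nu> n N r = (THE c. \<exists>\<pi>. monic_OPs \<nu> N r \<pi> \<and>
       [:0, 1:] * \<pi> n = \<pi> (Suc n) + smult c (\<pi> (n - 1)))"

definition cnu :: "nat \<Rightarrow> real" where
  "cnu \<nu> = real ((2*\<nu> - 1) choose (\<nu> - 1))"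

definition Z0 :: "nat \<Rightarrow> real \<Rightarrow> real" where
  "Z0 \<nu> y = (THE Z. 0 < Z \<and> Z \<le> 1 \<and> 1 = Z + cnu \<nu> * y * Z^\<nu>)"

text \<open>Z_g, with the fixed polynomials P g = P_{3g-2,nu} as a parameter.\<close>
definition Zg :: "(nat \<Rightarrow> real poly) \<Rightarrow> nat \<Rightarrow> nat \<Rightarrow> real \<Rightarrow> real" where
  "Zg P \<nu> g y = (if g = 0 then Z0 \<nu> y else
     Z0 \<nu> y * (Z0 \<nu> y - 1) * poly (P g) (Z0 \<nu> y) /
       (real \<nu> - (real \<nu> - 1) * Z0 \<nu> y) ^ (5*g - 1))"

definition acoef :: "(nat \<Rightarrow> real poly) \<Rightarrow> nat \<Rightarrow> nat \<Rightarrow> real \<Rightarrow> nat \<Rightarrow> real" where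
  "acoef P \<nu> g \<gamma> = (THE a. (\<forall>i<\<nu> - 1. a i = 0) \<and>
     (\<exists>n0. \<forall>n::nat\<ge>n0.
        (\<lambda>i. a i * real n powr (- (real i / real \<nu>))) sums Zg P \<nu> g (\<gamma> * real n ^ (\<nu> - 1))))"

definition Gpart :: "(nat \<Rightarrow> real poly) \<Rightarrow> nat \<Rightarrow> real \<Rightarrow> real \<Rightarrow> nat \<Rightarrow> nat \<Rightarrow> real" where
  "Gpart P \<nu> \<alpha> \<gamma> d n = \<alpha> * (\<Sum>j = 0..(d + 1 - \<nu>) div (2*\<nu>).
      \<Sum>i = \<nu> - 1..d - 2*j*\<nu>. acoef P \<nu> j \<gamma> i / real n powr (real (2*j) + real i / real \<nu>))"

end

theory Submission
  imports Defs "HOL-Complex_Analysis.Complex_Analysis" "HOL-Library.Landau_Symbols"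
begin

text \<open>Z_g(y) is a rational function R_g of Z_0(y), holomorphic on the unit disc. Putting
  \<epsilon> = (c_\<nu> y)^(-1/\<nu>), one has Z_0(y) = \<epsilon> W(\<epsilon>) where W is the holomorphic local inverse of
  w \<mapsto> (1 - w^\<nu>)/w at w = 1. For y = \<gamma> n^(\<nu>-1) we get \<epsilon> = \<kappa> n^(-(\<nu>-1)/\<nu>), so Z_g is a
  convergent power series in t = n^(-1/\<nu>) with vanishing coefficients below t^(\<nu>-1); these
  coefficients are the a_{i,g,\<nu>}(\<gamma>), and truncating after t^D leaves an error O(t^(D+1)).
  Hypothesis (H_G) with m = d gives x_n = \<alpha> \<Sum>_{g\<le>d} Z_g t^(2g\<nu>) + O(t^(2\<nu>(d+1))). Replacing
  each Z_g by its truncation after t^(d-2g\<nu>) costs O(t^(d+1)), and the genera left out of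
  G^(d) contribute only O(t^(\<nu>-1+2g\<nu>)) \<subseteq> O(t^(d+1)).\<close>

section \<open>Power series along a sequence tending to zero\<close>

lemma powser_remainder_bound:
  fixes a :: "nat \<Rightarrow> real"
  assumes sm: "summable (\<lambda>i. \<bar>a i\<bar> * s^i)" and s: "s > 0" and t: "0 \<le> t" "t \<le> s"
  shows "\<bar>(\<Sum>i. a i * t^i) - (\<Sum>i\<le>D. a i * t^i)\<bar> \<le> t^(Suc D) * ((\<Sum>i. \<bar>a i\<bar> * s^i) / s^(Suc D))"
proof -
  let ?k = "Suc D"
  have le: "\<bar>a i * t^i\<bar> \<le> \<bar>a i\<bar> * s^i" for i
    using t by (auto simp: abs_mult intro!: mult_left_mono power_mono)
  have sa: "summable (\<lambda>i. a i * t^i)"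
    by (rule summable_comparison_test[OF _ sm]) (use le in auto)
  have sabs: "summable (\<lambda>i. \<bar>a i * t^i\<bar>)"
    by (rule summable_comparison_test[OF _ sm]) (use le in auto)
  have "(\<Sum>i. a i * t^i) = (\<Sum>i. a (i + ?k) * t^(i + ?k)) + (\<Sum>i<?k. a i * t^i)"
    by (rule suminf_split_initial_segment[OF sa])
  then have eq: "(\<Sum>i. a i * t^i) - (\<Sum>i\<le>D. a i * t^i) = (\<Sum>i. a (i + ?k) * t^(i + ?k))"
    by (simp add: lessThan_Suc_atMost)
  have s1: "summable (\<lambda>i. \<bar>a (i + ?k) * t^(i + ?k)\<bar>)"
    using summable_ignore_initial_segment[OF sabs, of ?k] by simp
  have s2: "summable (\<lambda>i. \<bar>a (i + ?k)\<bar> * s^(i + ?k))"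
    using summable_ignore_initial_segment[OF sm, of ?k] by simp
  have "\<bar>\<Sum>i. a (i + ?k) * t^(i + ?k)\<bar> \<le> (\<Sum>i. \<bar>a (i + ?k) * t^(i + ?k)\<bar>)"
    by (rule summable_rabs[OF s1])
  also have "\<dots> \<le> (\<Sum>i. t^?k * (\<bar>a (i + ?k)\<bar> * s^(i + ?k)) / s^?k)"
  proof (rule suminf_le)
    show "summable (\<lambda>i. t^?k * (\<bar>a (i + ?k)\<bar> * s^(i + ?k)) / s^?k)"
      using s2 by (intro summable_divide summable_mult)
    show "\<bar>a (n + ?k) * t^(n + ?k)\<bar> \<le> t^?k * (\<bar>a (n + ?k)\<bar> * s^(n + ?k)) / s^?k" for n
    proof -
      have "t^n \<le> s^n"
        using t by (intro power_mono) auto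
      then have "\<bar>a (n + ?k)\<bar> * (t^?k * t^n) \<le> \<bar>a (n + ?k)\<bar> * (t^?k * s^n)"
        using t by (intro mult_left_mono) auto
      then show ?thesis
        using s t by (simp add: abs_mult power_add field_simps)
    qed
  qed (use s1 in auto)
  also have "\<dots> = (\<Sum>i. t^?k * (\<bar>a (i + ?k)\<bar> * s^(i + ?k))) / s^?k"
    by (rule suminf_divide) (rule summable_mult[OF s2])
  also have "\<dots> = t^?k * (\<Sum>i. \<bar>a (i + ?k)\<bar> * s^(i + ?k)) / s^?k"
    by (subst suminf_mult[OF s2]) simp
  also have "\<dots> \<le> t^?k * (\<Sum>i. \<bar>a i\<bar> * s^i) / s^?k"
  proof -
    have "(\<Sum>i. \<bar>a i\<bar> * s^i) = (\<Sum>i. \<bar>a (i + ?k)\<bar> * s^(i + ?k)) + (\<Sum>i<?k. \<bar>a i\<bar> * s^i)"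
      by (rule suminf_split_initial_segment[OF sm])
    moreover have "(\<Sum>i<?k. \<bar>a i\<bar> * s^i) \<ge> 0"
      using s by (intro sum_nonneg) auto
    ultimately have "(\<Sum>i. \<bar>a (i + ?k)\<bar> * s^(i + ?k)) \<le> (\<Sum>i. \<bar>a i\<bar> * s^i)"
      by linarith
    then show ?thesis
      using s t by (intro divide_right_mono mult_left_mono) auto
  qed
  finally show ?thesis
    using eq by simp
qed

lemma powser_remainder_bigo:
  fixes a :: "nat \<Rightarrow> real"
  assumes "F \<noteq> bot" "(t \<longlongrightarrow> 0) F"
    and sums: "eventually (\<lambda>x. 0 < t x \<and> (\<lambda>i. a i * t x ^ i) sums f x) F"
  shows "(\<lambda>x. f x - (\<Sum>i\<le>D. a i * t x ^ i)) \<in> O[F](\<lambda>x. t x ^ Suc D)"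
proof -
  obtain x0 where x0: "0 < t x0" "summable (\<lambda>i. a i * t x0 ^ i)"
    using eventually_happens'[OF \<open>F \<noteq> bot\<close> sums] by (auto dest: sums_summable)
  define s where "s = t x0 / 2"
  have "s > 0"
    using x0 by (simp add: s_def)
  have summable: "summable (\<lambda>i. \<bar>a i\<bar> * s ^ i)"
    using powser_insidea[OF x0(2), of s] x0 \<open>s > 0\<close> by (simp add: s_def abs_mult power_abs)
  have "eventually (\<lambda>x. t x \<le> s) F"
    using order_tendstoD(2)[OF assms(2) \<open>s > 0\<close>] by eventually_elim simp
  with sums have "eventually (\<lambda>x. norm (f x - (\<Sum>i\<le>D. a i * t x ^ i))
      \<le> (\<Sum>i. \<bar>a i\<bar> * s ^ i) / s ^ Suc D * norm (t x ^ Suc D)) F"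
  proof eventually_elim
    case (elim x)
    then have "f x = (\<Sum>i. a i * t x ^ i)"
      using sums_unique by blast
    then show ?case
      using powser_remainder_bound[OF summable \<open>s > 0\<close>, of "t x" D] elim
      by (simp add: abs_mult mult_ac)
  qed
  then show ?thesis
    by (rule bigoI)
qed

lemma powser_coeffs_unique:
  fixes a b :: "nat \<Rightarrow> real"
  assumes "F \<noteq> bot" "(t \<longlongrightarrow> 0) F"
    and "eventually (\<lambda>x. 0 < t x \<and> (\<lambda>i. a i * t x ^ i) sums f x) F"
    and "eventually (\<lambda>x. (\<lambda>i. b i * t x ^ i) sums f x) F"
  shows "a = b"
proof -
  define c where "c i = a i - b i" for i
  have sums: "eventually (\<lambda>x. 0 < t x \<and> (\<lambda>i. c i * t x ^ i) sums 0) F"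
    using assms(3,4) by eventually_elim (auto simp: c_def left_diff_distrib dest: sums_diff)
  have "c k = 0" for k
  proof (induction k rule: less_induct)
    case (less k)
    have "(\<Sum>i\<le>k. c i * t x ^ i) = c k * t x ^ k" for x
      using less by (simp add: lessThan_Suc_atMost[symmetric])
    then have "(\<lambda>x. - (c k * t x ^ k)) \<in> O[F](\<lambda>x. t x ^ Suc k)"
      using powser_remainder_bigo[OF assms(1,2) sums, of k] by simp
    then obtain C where C: "eventually (\<lambda>x. \<bar>c k\<bar> * \<bar>t x\<bar> ^ k \<le> C * (\<bar>t x\<bar> ^ k * \<bar>t x\<bar>)) F"
      by (elim landau_o.bigE) (auto simp: abs_mult power_abs mult_ac)
    have "eventually (\<lambda>x. \<bar>c k\<bar> \<le> C * \<bar>t x\<bar>) F"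
      using C sums by eventually_elim (auto simp: mult_ac)
    moreover have "((\<lambda>x. C * \<bar>t x\<bar>) \<longlongrightarrow> C * \<bar>0\<bar>) F"
      by (intro tendsto_intros assms(2))
    ultimately have "\<bar>c k\<bar> \<le> 0"
      by (intro tendsto_le[OF assms(1) _ tendsto_const]) simp_all
    then show ?case
      by simp
  qed
  then show ?thesis
    by (auto simp: c_def fun_eq_iff)
qed

lemma sums_powser_subst_monomial:
  fixes C :: "nat \<Rightarrow> real"
  assumes "m > 0" and sums: "(\<lambda>k. C k * (\<kappa> * t ^ m) ^ k) sums s"
  shows "(\<lambda>i. (if m dvd i then C (i div m) * \<kappa> ^ (i div m) else 0) * t ^ i) sums s"
proof -
  define b where "b = (\<lambda>i. (if m dvd i then C (i div m) * \<kappa> ^ (i div m) else 0) * t ^ i)"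
  have mono: "strict_mono (\<lambda>k. k * m)"
    using \<open>m > 0\<close> by (intro strict_monoI) simp
  have zero: "b i = 0" if "i \<notin> range (\<lambda>k. k * m)" for i
  proof -
    have "\<not> m dvd i"
    proof
      assume "m dvd i"
      then have "i = (i div m) * m"
        by simp
      with that show False
        by blast
    qed
    then show ?thesis
      by (simp add: b_def)
  qed
  have "b (k * m) = C k * (\<kappa> * t ^ m) ^ k" for k
    using \<open>m > 0\<close> by (simp add: b_def power_mult_distrib mult.commute flip: power_mult)
  then have "(\<lambda>k. b (k * m)) sums s"
    using sums by simp
  then have "b sums s"
    using sums_mono_reindex[of "\<lambda>k. k * m" b s] mono zero by blast
  then show ?thesis
    by (simp only: b_def)
qed

lemma bigo_imp_eventually_less:
  fixes f g :: "'a \<Rightarrow> real"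
  assumes "f \<in> O[F](g)" "eventually (\<lambda>x. g x > 0) F"
  obtains K where "eventually (\<lambda>x. \<bar>f x\<bar> < K * g x) F"
proof -
  obtain c where "eventually (\<lambda>x. \<bar>f x\<bar> \<le> c * \<bar>g x\<bar>) F"
    using assms(1) by (elim landau_o.bigE) simp
  with assms(2) have "eventually (\<lambda>x. \<bar>f x\<bar> < (c + 1) * g x) F"
    by eventually_elim (simp add: distrib_right)
  then show thesis
    by (rule that)
qed

section \<open>The expansion variable n^(-1/\<nu>)\<close>

definition inv_nroot :: "nat \<Rightarrow> nat \<Rightarrow> real" where
  "inv_nroot \<nu> n = real n powr (- 1 / real \<nu>)"

lemma inv_nroot_pos: "n > 0 \<Longrightarrow> inv_nroot \<nu> n > 0"
  by (simp add: inv_nroot_def)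

lemma inv_nroot_le_1: "n > 0 \<Longrightarrow> inv_nroot \<nu> n \<le> 1"
  unfolding inv_nroot_def using powr_mono2'[of "- 1 / real \<nu>" 1 "real n"] by simp

lemma inv_nroot_tendsto_0: "\<nu> > 0 \<Longrightarrow> inv_nroot \<nu> \<longlonglongrightarrow> 0"
  unfolding inv_nroot_def by (intro tendsto_neg_powr filterlim_real_sequentially) auto

lemma power_inv_nroot: "n > 0 \<Longrightarrow> inv_nroot \<nu> n ^ i = real n powr (- (real i / real \<nu>))"
  unfolding inv_nroot_def by (subst powr_power) auto

lemma power_inv_nroot_mult:
  "n > 0 \<Longrightarrow> \<nu> > 0 \<Longrightarrow> inv_nroot \<nu> n ^ (\<nu> * k) = 1 / real n ^ k"
  by (simp add: power_inv_nroot powr_minus_divide powr_realpow)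

lemma power_inv_nroot_bigo:
  "j \<le> k \<Longrightarrow> (\<lambda>n. inv_nroot \<nu> n ^ k) \<in> O(\<lambda>n. inv_nroot \<nu> n ^ j)"
  by (intro bigoI[of _ 1] eventually_mono[OF eventually_gt_at_top[of 0]])
     (simp add: power_decreasing inv_nroot_pos inv_nroot_le_1 less_imp_le)

lemma bigo_power_inv_nroot_imp_bound:
  fixes f :: "nat \<Rightarrow> real"
  assumes "f \<in> O(\<lambda>n. inv_nroot \<nu> n ^ k)"
  shows "\<exists>K n0. \<forall>n\<ge>n0. \<bar>f n\<bar> < K / real n powr (real k / real \<nu>)"
proof -
  have "eventually (\<lambda>n. inv_nroot \<nu> n ^ k > 0) sequentially"
    using eventually_gt_at_top[of 0] by eventually_elim (simp add: inv_nroot_pos)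
  with assms obtain K where "eventually (\<lambda>n. \<bar>f n\<bar> < K * inv_nroot \<nu> n ^ k) sequentially"
    by (rule bigo_imp_eventually_less)
  with eventually_gt_at_top[of 0] have "eventually (\<lambda>n. \<bar>f n\<bar> < K / real n powr (real k / real \<nu>)) sequentially"
    by eventually_elim (simp add: power_inv_nroot powr_minus_divide)
  then show ?thesis
    unfolding eventually_sequentially by blast
qed

lemma acoef_eqI:
  assumes "\<nu> > 0" and "\<forall>i<\<nu> - 1. a i = 0"
    and sums: "eventually (\<lambda>n. (\<lambda>i. a i * inv_nroot \<nu> n ^ i) sums Zg P \<nu> g (\<gamma> * real n ^ (\<nu> - 1))) sequentially"
  shows "acoef P \<nu> g \<gamma> = a"
proof -
  have powr_form: "(\<exists>n0. \<forall>n\<ge>n0. (\<lambda>i. b i * real n powr (- (real i / real \<nu>))) sums f n)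
      \<longleftrightarrow> eventually (\<lambda>n. (\<lambda>i. b i * inv_nroot \<nu> n ^ i) sums f n) sequentially" for b f
    by (simp only: eventually_sequentially[symmetric])
       (intro eventually_subst eventually_mono[OF eventually_gt_at_top[of 0]], simp add: power_inv_nroot)
  have sums_pos: "eventually (\<lambda>n. 0 < inv_nroot \<nu> n \<and> (\<lambda>i. a i * inv_nroot \<nu> n ^ i) sums Zg P \<nu> g (\<gamma> * real n ^ (\<nu> - 1))) sequentially"
    using sums eventually_gt_at_top[of 0] by eventually_elim (simp add: inv_nroot_pos)
  show ?thesis
    unfolding acoef_def powr_form
  proof (rule the_equality)
    fix b assume "(\<forall>i<\<nu> - 1. b i = 0) \<and>
      eventually (\<lambda>n. (\<lambda>i. b i * inv_nroot \<nu> n ^ i) sums Zg P \<nu> g (\<gamma> * real n ^ (\<nu> - 1))) sequentially"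
    then have "a = b"
      using powser_coeffs_unique[OF _ inv_nroot_tendsto_0[OF \<open>\<nu> > 0\<close>] sums_pos] by simp
    then show "b = a" ..
  qed (use assms in simp)
qed

section \<open>Z_g as a power series in n^(-1/\<nu>)\<close>

lemma Z0_root:
  assumes "\<nu> \<ge> 1" "y \<ge> 0"
  shows "0 < Z0 \<nu> y \<and> Z0 \<nu> y \<le> 1 \<and> 1 = Z0 \<nu> y + cnu \<nu> * y * Z0 \<nu> y ^ \<nu>"
proof -
  define f where "f = (\<lambda>Z::real. Z + cnu \<nu> * y * Z ^ \<nu>)"
  have c: "cnu \<nu> * y \<ge> 0"
    using assms by (simp add: cnu_def)
  have mono: "strict_mono_on {0..} f"
    unfolding f_def using c
    by (intro strict_mono_onI add_less_le_mono mult_left_mono power_mono) auto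
  have "\<exists>Z. 0 \<le> Z \<and> Z \<le> 1 \<and> f Z = 1"
    using c assms by (intro IVT') (auto simp: f_def zero_power intro!: continuous_intros)
  then obtain Z where Z: "0 \<le> Z" "Z \<le> 1" "f Z = 1"
    by blast
  have "Z \<noteq> 0"
    using Z assms by (auto simp: f_def zero_power)
  then have root: "0 < Z \<and> Z \<le> 1 \<and> 1 = Z + cnu \<nu> * y * Z ^ \<nu>"
    using Z by (simp add: f_def)
  have "Z0 \<nu> y = Z"
    unfolding Z0_def
  proof (rule the_equality)
    show "0 < Z \<and> Z \<le> 1 \<and> 1 = Z + cnu \<nu> * y * Z ^ \<nu>"
      by (fact root)
    fix Z' assume "0 < Z' \<and> Z' \<le> 1 \<and> 1 = Z' + cnu \<nu> * y * Z' ^ \<nu>"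
    then show "Z' = Z"
      using strict_mono_on_eqD[OF mono, of Z' Z] Z by (simp add: f_def)
  qed
  then show ?thesis
    using root by simp
qed

lemma Z0_rescaled:
  assumes "\<nu> > 0" "y > 0" "e > 0" and e: "cnu \<nu> * y * e ^ \<nu> = 1"
  shows "(1 - (Z0 \<nu> y / e) ^ \<nu>) / (Z0 \<nu> y / e) = e" "\<bar>1 - Z0 \<nu> y / e\<bar> \<le> e"
proof -
  define W where "W = Z0 \<nu> y / e"
  have Z: "0 < Z0 \<nu> y" "1 = Z0 \<nu> y + cnu \<nu> * y * Z0 \<nu> y ^ \<nu>"
    using Z0_root[of \<nu> y] assms by auto
  have "W > 0"
    using Z \<open>e > 0\<close> by (simp add: W_def)
  have "cnu \<nu> * y = 1 / e ^ \<nu>"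
    using e \<open>e > 0\<close> by (simp add: field_simps)
  then have "cnu \<nu> * y * Z0 \<nu> y ^ \<nu> = W ^ \<nu>"
    by (simp add: W_def power_divide)
  then have W: "W ^ \<nu> = 1 - e * W"
    using Z \<open>e > 0\<close> by (simp add: W_def)
  then have "W < 1"
    using \<open>W > 0\<close> \<open>e > 0\<close> by (smt (verit) mult_pos_pos one_le_power)
  then have "W ^ \<nu> \<le> W"
    using \<open>W > 0\<close> \<open>\<nu> > 0\<close> power_decreasing[of 1 \<nu> W] by simp
  then have "1 - e \<le> W"
    using W \<open>W < 1\<close> \<open>e > 0\<close> by (smt (verit) mult_left_le)
  then show "(1 - W ^ \<nu>) / W = e" "\<bar>1 - W\<bar> \<le> e"
    using W \<open>W > 0\<close> \<open>W < 1\<close> by auto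
qed

lemma holomorphic_inverse_near_one:
  assumes "\<nu> > 0"
  obtains r \<rho> g where "r > 0" "\<rho> > 0" "g holomorphic_on ball 0 \<rho>"
    "\<And>w. w \<in> ball 1 r \<Longrightarrow> g ((1 - w ^ \<nu>) / w) = w"
proof -
  define f where "f w = (1 - w ^ \<nu>) / w" for w :: complex
  have hol: "f holomorphic_on ball 1 (1/2)"
    unfolding f_def by (intro holomorphic_intros) (auto simp: dist_norm)
  have "(f has_field_derivative - of_nat \<nu>) (at 1)"
    unfolding f_def by (auto intro!: derivative_eq_intros)
  then have deriv: "deriv f 1 \<noteq> 0"
    using assms by (simp add: DERIV_imp_deriv)
  have centre: "1 \<in> ball (1::complex) (1/2)"
    by simp
  obtain r where r: "r > 0" "ball (1::complex) r \<subseteq> ball 1 (1/2)" "open (f ` ball 1 r)" "inj_on f (ball 1 r)"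
    by (rule has_complex_derivative_locally_invertible[OF hol centre open_ball deriv])
  obtain g where g: "g holomorphic_on f ` ball 1 r" "\<And>w. w \<in> ball 1 r \<Longrightarrow> g (f w) = w"
    using holomorphic_has_inverse[OF holomorphic_on_subset[OF hol r(2)] open_ball r(4)] by metis
  have "0 \<in> f ` ball 1 r"
    using \<open>r > 0\<close> by (intro image_eqI[of _ _ 1]) (auto simp: f_def)
  then obtain \<rho> where "\<rho> > 0" "ball 0 \<rho> \<subseteq> f ` ball 1 r"
    using r(3) open_contains_ball by blast
  then show ?thesis
    using that[of r \<rho> g] r g holomorphic_on_subset by (auto simp: f_def)
qed

text \<open>The rational function R with Z_g(y) = R(Z_0(y)), extended to the complex plane
  so that it can be expanded in a power series.\<close>
definition Zg_rational :: "(nat \<Rightarrow> real poly) \<Rightarrow> nat \<Rightarrow> nat \<Rightarrow> complex \<Rightarrow> complex" where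
  "Zg_rational P \<nu> g z = (if g = 0 then z else
     z * (z - 1) * poly (map_poly of_real (P g)) z / (of_nat \<nu> - (of_nat \<nu> - 1) * z) ^ (5*g - 1))"

lemma Zg_rational_of_real: "Zg_rational P \<nu> g (of_real (Z0 \<nu> y)) = of_real (Zg P \<nu> g y)"
proof -
  have "poly (map_poly of_real p) (of_real x) = (of_real (poly p x) :: complex)" for p x
    by (induction p) (auto simp: map_poly_pCons)
  then show ?thesis
    unfolding Zg_rational_def Zg_def by simp
qed

lemma Zg_rational_0 [simp]: "Zg_rational P \<nu> g 0 = 0"
  by (simp add: Zg_rational_def)

lemma Zg_rational_holomorphic:
  assumes "\<nu> > 0"
  shows "Zg_rational P \<nu> g holomorphic_on ball 0 1"
proof -
  have "of_nat \<nu> - (of_nat \<nu> - 1) * z \<noteq> (0::complex)" if "z \<in> ball 0 1" for z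
  proof -
    have "(of_nat \<nu> - 1 :: complex) = of_nat (\<nu> - 1)"
      using assms by (simp add: of_nat_diff)
    then have "norm (of_nat \<nu> - 1 :: complex) = real \<nu> - 1"
      using assms by (simp only: norm_of_nat)
    then have "norm ((of_nat \<nu> - 1) * z) \<le> real \<nu> - 1"
      using assms that by (simp add: norm_mult mult_left_le dist_norm)
    then show ?thesis
      using norm_diff_ineq[of "of_nat \<nu>" "(of_nat \<nu> - 1) * z :: complex"] by auto
  qed
  then show ?thesis
    unfolding Zg_rational_def by (cases "g = 0") (simp_all add: holomorphic_on_ident, intro holomorphic_intros, auto)
qed

text \<open>With W = Z_0(y)/\<epsilon> the equation defining Z_0 becomes (1 - W^\<nu>)/W = \<epsilon>, so W is the
  local inverse of w \<mapsto> (1 - w^\<nu>)/w at w = 1 evaluated at \<epsilon>, and Z_g(y) = R(\<epsilon> W(\<epsilon>)) is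
  holomorphic in \<epsilon> near 0.\<close>
lemma Zg_powser_in_eps:
  assumes "\<nu> > 0"
  obtains C :: "nat \<Rightarrow> real" and \<delta> where "\<delta> > 0" "C 0 = 0"
    "\<And>y e. y > 0 \<Longrightarrow> 0 < e \<Longrightarrow> e < \<delta> \<Longrightarrow> cnu \<nu> * y * e ^ \<nu> = 1 \<Longrightarrow>
       (\<lambda>k. C k * e ^ k) sums Zg P \<nu> g y"
proof -
  obtain r \<rho> inv where "r > 0" "\<rho> > 0" and hol_inv: "inv holomorphic_on ball 0 \<rho>"
    and inv: "\<And>w. w \<in> ball 1 r \<Longrightarrow> inv ((1 - w ^ \<nu>) / w) = w"
    using holomorphic_inverse_near_one[OF assms] by blast
  define h where "h e = e * inv e" for e
  have hol_h: "h holomorphic_on ball 0 \<rho>"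
    unfolding h_def using hol_inv by (intro holomorphic_intros)
  have "open (h -` ball 0 1 \<inter> ball 0 \<rho>)"
    using holomorphic_on_imp_continuous_on[OF hol_h] by (simp add: continuous_on_open_vimage)
  moreover have "0 \<in> h -` ball 0 1 \<inter> ball 0 \<rho>"
    using \<open>\<rho> > 0\<close> by (simp add: h_def)
  ultimately obtain \<delta>0 where "\<delta>0 > 0" and \<delta>0: "ball 0 \<delta>0 \<subseteq> h -` ball 0 1 \<inter> ball 0 \<rho>"
    using open_contains_ball by blast
  define \<delta> where "\<delta> = min \<delta>0 r"
  define H where "H = Zg_rational P \<nu> g \<circ> h"
  have "H holomorphic_on ball 0 \<delta>"
    unfolding H_def using \<delta>0
    by (intro holomorphic_on_compose_gen[OF _ Zg_rational_holomorphic[OF assms]]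
          holomorphic_on_subset[OF hol_h]) (auto simp: \<delta>_def)
  note powser = holomorphic_power_series[OF this]
  define C where "C k = Re ((deriv ^^ k) H 0 / fact k)" for k
  show thesis
  proof (rule that)
    show "\<delta> > 0" "C 0 = 0"
      using \<open>\<delta>0 > 0\<close> \<open>r > 0\<close> by (simp_all add: \<delta>_def C_def H_def h_def)
    fix y e :: real assume "y > 0" "0 < e" "e < \<delta>" "cnu \<nu> * y * e ^ \<nu> = 1"
    define W where "W = Z0 \<nu> y / e"
    have W: "(1 - W ^ \<nu>) / W = e" "\<bar>1 - W\<bar> \<le> e"
      unfolding W_def using assms \<open>y > 0\<close> \<open>e > 0\<close> \<open>cnu \<nu> * y * e ^ \<nu> = 1\<close> by (rule Z0_rescaled)+
    have "dist 1 (of_real W :: complex) = \<bar>1 - W\<bar>"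
      by (metis dist_norm norm_of_real of_real_1 of_real_diff)
    then have "of_real W \<in> ball (1::complex) r"
      using W(2) \<open>e < \<delta>\<close> by (simp add: \<delta>_def)
    from inv[OF this] have "inv (of_real e) = of_real W"
      by (simp flip: W(1))
    moreover have "e * W = Z0 \<nu> y"
      using \<open>e > 0\<close> by (simp add: W_def)
    ultimately have H_e: "H (of_real e) = of_real (Zg P \<nu> g y)"
      by (simp add: H_def h_def Zg_rational_of_real flip: of_real_mult)
    have "(\<lambda>k. (deriv ^^ k) H 0 / fact k * of_real (e ^ k)) sums H (of_real e)"
      using powser[of "of_real e"] \<open>0 < e\<close> \<open>e < \<delta>\<close> by simp
    from sums_Re[OF this] have Re_sums: "(\<lambda>k. Re ((deriv ^^ k) H 0 / fact k * of_real (e ^ k))) sums Zg P \<nu> g y"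
      by (simp only: H_e Re_complex_of_real)
    have Re_mult: "Re z * x = Re (z * of_real x)" for z x
      by simp
    show "(\<lambda>k. C k * e ^ k) sums Zg P \<nu> g y"
      unfolding C_def Re_mult by (fact Re_sums)
  qed
qed

lemma Zg_expansion_exists:
  assumes "\<nu> \<ge> 2" "\<gamma> > 0"
  obtains a where "\<forall>i<\<nu> - 1. a i = 0"
    "eventually (\<lambda>n. (\<lambda>i. a i * inv_nroot \<nu> n ^ i) sums Zg P \<nu> g (\<gamma> * real n ^ (\<nu> - 1))) sequentially"
proof -
  have "\<nu> > 0"
    using assms by simp
  obtain \<delta> and C :: "nat \<Rightarrow> real" where "\<delta> > 0" "C 0 = 0" and sums:
    "\<And>y e. y > 0 \<Longrightarrow> 0 < e \<Longrightarrow> e < \<delta> \<Longrightarrow> cnu \<nu> * y * e ^ \<nu> = 1 \<Longrightarrow> (\<lambda>k. C k * e ^ k) sums Zg P \<nu> g y"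
    by (rule Zg_powser_in_eps[OF \<open>\<nu> > 0\<close>, of P g]) (rule that)
  define \<kappa> where "\<kappa> = (cnu \<nu> * \<gamma>) powr (- 1 / real \<nu>)"
  have "cnu \<nu> > 0"
    by (simp add: cnu_def)
  then have "cnu \<nu> * \<gamma> > 0" "\<kappa> > 0"
    using \<open>\<gamma> > 0\<close> by (simp_all add: \<kappa>_def)
  have "\<kappa> ^ \<nu> = (cnu \<nu> * \<gamma>) powr (real \<nu> * (- 1 / real \<nu>))"
    unfolding \<kappa>_def by (rule powr_power) (use \<open>cnu \<nu> * \<gamma> > 0\<close> in linarith)
  also have "\<dots> = 1 / (cnu \<nu> * \<gamma>)"
    using assms \<open>cnu \<nu> * \<gamma> > 0\<close> by (simp add: powr_minus_divide)
  finally have \<kappa>_pow: "\<kappa> ^ \<nu> = 1 / (cnu \<nu> * \<gamma>)" .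
  \<comment> \<open>the parameter \<epsilon> of Zg_powser_in_eps for y = \<gamma> n^(\<nu>-1)\<close>
  define e where "e n = \<kappa> * inv_nroot \<nu> n ^ (\<nu> - 1)" for n
  have "e \<longlonglongrightarrow> \<kappa> * 0 ^ (\<nu> - 1)"
    unfolding e_def using assms by (intro tendsto_intros inv_nroot_tendsto_0) auto
  then have "eventually (\<lambda>n. e n < \<delta>) sequentially"
    using assms \<open>\<delta> > 0\<close> by (intro order_tendstoD(2)) (auto simp: zero_power)
  have "\<nu> - 1 > 0"
    using assms by simp
  define a where "a i = (if (\<nu> - 1) dvd i then C (i div (\<nu> - 1)) * \<kappa> ^ (i div (\<nu> - 1)) else 0)" for i
  show thesis
  proof (rule that)
    show "\<forall>i<\<nu> - 1. a i = 0"
      using \<open>C 0 = 0\<close> by (auto simp: a_def nat_dvd_not_less)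
    show "eventually (\<lambda>n. (\<lambda>i. a i * inv_nroot \<nu> n ^ i) sums Zg P \<nu> g (\<gamma> * real n ^ (\<nu> - 1))) sequentially"
      using \<open>eventually (\<lambda>n. e n < \<delta>) sequentially\<close> eventually_gt_at_top[of 0]
    proof eventually_elim
      case (elim n)
      have "e n ^ \<nu> = \<kappa> ^ \<nu> * inv_nroot \<nu> n ^ (\<nu> * (\<nu> - 1))"
        by (simp add: e_def power_mult_distrib mult.commute flip: power_mult)
      then have "cnu \<nu> * (\<gamma> * real n ^ (\<nu> - 1)) * e n ^ \<nu> = 1"
        using elim assms \<open>cnu \<nu> > 0\<close> by (simp add: \<kappa>_pow power_inv_nroot_mult)
      moreover have "e n > 0"
        using elim \<open>\<kappa> > 0\<close> by (simp add: e_def inv_nroot_pos)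
      ultimately have "(\<lambda>k. C k * (\<kappa> * inv_nroot \<nu> n ^ (\<nu> - 1)) ^ k) sums Zg P \<nu> g (\<gamma> * real n ^ (\<nu> - 1))"
        using sums[of "\<gamma> * real n ^ (\<nu> - 1)" "e n"] elim \<open>\<gamma> > 0\<close> by (simp add: e_def)
      then show ?case
        unfolding a_def by (rule sums_powser_subst_monomial[OF \<open>\<nu> - 1 > 0\<close>])
    qed
  qed
qed

lemma acoef_expansion:
  assumes "\<nu> \<ge> 2" "\<gamma> > 0"
  shows acoef_eq_0: "\<forall>i<\<nu> - 1. acoef P \<nu> g \<gamma> i = 0"
    and sums_acoef: "eventually (\<lambda>n. (\<lambda>i. acoef P \<nu> g \<gamma> i * inv_nroot \<nu> n ^ i)
                      sums Zg P \<nu> g (\<gamma> * real n ^ (\<nu> - 1))) sequentially"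
proof -
  obtain a where "\<forall>i<\<nu> - 1. a i = 0"
    "eventually (\<lambda>n. (\<lambda>i. a i * inv_nroot \<nu> n ^ i) sums Zg P \<nu> g (\<gamma> * real n ^ (\<nu> - 1))) sequentially"
    using Zg_expansion_exists[OF assms] .
  moreover from this have "acoef P \<nu> g \<gamma> = a"
    using assms by (intro acoef_eqI) auto
  ultimately show "\<forall>i<\<nu> - 1. acoef P \<nu> g \<gamma> i = 0"
    "eventually (\<lambda>n. (\<lambda>i. acoef P \<nu> g \<gamma> i * inv_nroot \<nu> n ^ i) sums Zg P \<nu> g (\<gamma> * real n ^ (\<nu> - 1))) sequentially"
    by simp_all
qed

lemma Zg_minus_acoef_bigo:
  assumes "\<nu> \<ge> 2" "\<gamma> > 0"
  shows "(\<lambda>n. Zg P \<nu> g (\<gamma> * real n ^ (\<nu> - 1)) - (\<Sum>i\<le>D. acoef P \<nu> g \<gamma> i * inv_nroot \<nu> n ^ i))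
           \<in> O(\<lambda>n. inv_nroot \<nu> n ^ Suc D)"
proof (rule powser_remainder_bigo)
  show "inv_nroot \<nu> \<longlonglongrightarrow> 0"
    using assms by (intro inv_nroot_tendsto_0) auto
  show "eventually (\<lambda>n. 0 < inv_nroot \<nu> n \<and> (\<lambda>i. acoef P \<nu> g \<gamma> i * inv_nroot \<nu> n ^ i)
          sums Zg P \<nu> g (\<gamma> * real n ^ (\<nu> - 1))) sequentially"
    using sums_acoef[OF assms] eventually_gt_at_top[of 0] by eventually_elim (simp add: inv_nroot_pos)
qed simp

section \<open>Assembling G^(d)\<close>

lemma xrec_minus_genus_sum_bigo:
  fixes \<nu> m d :: nat and \<alpha> \<xi> K :: real
  assumes "\<nu> > 0" "\<xi> > 0" "d + 1 \<le> \<nu> * (2*m + 2)"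
    and HG: "\<forall>n\<ge>n0. \<forall>r>0. \<bar>xrec \<nu> n (real n / \<alpha>) r
               - \<alpha> * (\<Sum>g\<le>m. Zg P \<nu> g (\<alpha>^(\<nu>-1) * r) / real n ^ (2*g))\<bar> < K / real n ^ (2*m+2)"
  shows "(\<lambda>n. xrec \<nu> n (real n / \<alpha>) (real n ^ (\<nu>-1) / \<xi>)
            - \<alpha> * (\<Sum>g\<le>m. Zg P \<nu> g (\<alpha>^(\<nu>-1) / \<xi> * real n ^ (\<nu>-1)) * inv_nroot \<nu> n ^ (2*g*\<nu>)))
           \<in> O(\<lambda>n. inv_nroot \<nu> n ^ (d + 1))"
proof (intro bigoI[of _ "\<bar>K\<bar>"] eventually_mono[OF eventually_ge_at_top[of "max n0 1"]])
  fix n assume "max n0 1 \<le> n"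
  then have "n \<ge> n0" "n > 0"
    by auto
  define t where "t = inv_nroot \<nu> n"
  have t: "0 < t" "t \<le> 1"
    using \<open>n > 0\<close> by (simp_all add: t_def inv_nroot_pos inv_nroot_le_1)
  have "(\<Sum>g\<le>m. Zg P \<nu> g (\<alpha>^(\<nu>-1) * (real n ^ (\<nu>-1) / \<xi>)) / real n ^ (2*g))
      = (\<Sum>g\<le>m. Zg P \<nu> g (\<alpha>^(\<nu>-1) / \<xi> * real n ^ (\<nu>-1)) * t ^ (2*g*\<nu>))"
    using \<open>n > 0\<close> \<open>\<nu> > 0\<close> by (intro sum.cong) (simp_all add: t_def power_inv_nroot_mult mult.commute)
  moreover have "K / real n ^ (2*m+2) \<le> \<bar>K\<bar> * t ^ (d + 1)"
  proof -
    have "K / real n ^ (2*m+2) = K * t ^ (\<nu> * (2*m + 2))"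
      unfolding t_def power_inv_nroot_mult[OF \<open>n > 0\<close> \<open>\<nu> > 0\<close>] by simp
    also have "\<dots> \<le> \<bar>K\<bar> * t ^ (d + 1)"
      using t assms(3) by (intro mult_mono power_decreasing) auto
    finally show ?thesis .
  qed
  moreover have "real n ^ (\<nu>-1) / \<xi> > 0"
    using \<open>n > 0\<close> \<open>\<xi> > 0\<close> by simp
  ultimately show "norm (xrec \<nu> n (real n / \<alpha>) (real n ^ (\<nu>-1) / \<xi>)
            - \<alpha> * (\<Sum>g\<le>m. Zg P \<nu> g (\<alpha>^(\<nu>-1) / \<xi> * real n ^ (\<nu>-1)) * inv_nroot \<nu> n ^ (2*g*\<nu>)))
        \<le> \<bar>K\<bar> * norm (inv_nroot \<nu> n ^ (d + 1))"
    using HG \<open>n \<ge> n0\<close> t by (fastforce simp: t_def)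
qed

text \<open>The exponent of n^(-1/\<nu>) up to which the genus-g term Z_g n^(-2g) is expanded in G^(d);
  for the genera not summed in G^(d) it is \<nu> - 2, below the first nonzero coefficient.\<close>
definition trunc_deg :: "nat \<Rightarrow> nat \<Rightarrow> nat \<Rightarrow> nat" where
  "trunc_deg \<nu> d g = (if g \<le> (d + 1 - \<nu>) div (2*\<nu>) then d - 2*g*\<nu> else \<nu> - 2)"

lemma trunc_deg_order:
  assumes "\<nu> \<ge> 2"
  shows "d + 1 \<le> Suc (trunc_deg \<nu> d g) + 2*g*\<nu>"
proof (cases "g \<le> (d + 1 - \<nu>) div (2*\<nu>)")
  case True
  then have "2*g*\<nu> \<le> 2*\<nu> * ((d + 1 - \<nu>) div (2*\<nu>))"
    by simp
  also have "\<dots> \<le> d + 1 - \<nu>"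
    by (rule times_div_less_eq_dividend)
  finally show ?thesis
    using True assms by (simp add: trunc_deg_def)
next
  case False
  then have "(d + 1 - \<nu>) div (2*\<nu>) < g"
    by simp
  then have "d + 1 - \<nu> < g * (2*\<nu>)"
    using assms by (simp add: div_less_iff_less_mult)
  then show ?thesis
    using False assms by (simp add: trunc_deg_def algebra_simps)
qed

lemma Gpart_eq_truncations:
  assumes "\<nu> \<ge> 2" "\<gamma> > 0" "(d + 1 - \<nu>) div (2*\<nu>) \<le> m" "n > 0"
  shows "Gpart P \<nu> \<alpha> \<gamma> d n = \<alpha> * (\<Sum>g\<le>m.
           (\<Sum>i\<le>trunc_deg \<nu> d g. acoef P \<nu> g \<gamma> i * inv_nroot \<nu> n ^ i) * inv_nroot \<nu> n ^ (2*g*\<nu>))"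
proof -
  define J where "J = (d + 1 - \<nu>) div (2*\<nu>)"
  define T where "T g = (\<Sum>i\<le>trunc_deg \<nu> d g. acoef P \<nu> g \<gamma> i * inv_nroot \<nu> n ^ i) * inv_nroot \<nu> n ^ (2*g*\<nu>)" for g
  have low: "acoef P \<nu> g \<gamma> i = 0" if "i < \<nu> - 1" for g i
    using acoef_eq_0[OF assms(1,2)] that by blast
  have powr_eq: "real n powr (2 * real g + real i / real \<nu>) = 1 / (inv_nroot \<nu> n ^ i * inv_nroot \<nu> n ^ (2*g*\<nu>))" for g i
  proof -
    have e: "real (i + 2*g*\<nu>) / real \<nu> = 2 * real g + real i / real \<nu>"
      using assms(1) by (simp add: field_simps)
    have "inv_nroot \<nu> n ^ i * inv_nroot \<nu> n ^ (2*g*\<nu>) = inv_nroot \<nu> n ^ (i + 2*g*\<nu>)"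
      by (simp add: power_add)
    also have "\<dots> = real n powr (- (2 * real g + real i / real \<nu>))"
      unfolding power_inv_nroot[OF \<open>n > 0\<close>] e ..
    finally show ?thesis
      by (simp only: powr_minus_divide) simp
  qed
  have "(\<Sum>i = \<nu> - 1..d - 2*g*\<nu>. acoef P \<nu> g \<gamma> i / real n powr (real (2*g) + real i / real \<nu>)) = T g"
    if "g \<le> J" for g
  proof -
    have "(\<Sum>i = \<nu> - 1..d - 2*g*\<nu>. acoef P \<nu> g \<gamma> i / real n powr (real (2*g) + real i / real \<nu>))
        = (\<Sum>i\<le>d - 2*g*\<nu>. acoef P \<nu> g \<gamma> i * inv_nroot \<nu> n ^ i * inv_nroot \<nu> n ^ (2*g*\<nu>))"
      by (intro sum.mono_neutral_cong_left) (auto simp: powr_eq low)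
    then show ?thesis
      using that by (simp add: T_def trunc_deg_def J_def sum_distrib_right)
  qed
  then have "Gpart P \<nu> \<alpha> \<gamma> d n = \<alpha> * (\<Sum>g\<le>J. T g)"
    unfolding Gpart_def J_def[symmetric] atLeast0AtMost by simp
  also have "(\<Sum>g\<le>J. T g) = (\<Sum>g\<le>m. T g)"
  proof (rule sum.mono_neutral_left)
    show "\<forall>g\<in>{..m} - {..J}. T g = 0"
      using assms(1) by (auto simp: T_def trunc_deg_def J_def low)
  qed (use assms(3) in \<open>auto simp: J_def\<close>)
  finally show ?thesis
    by (simp add: T_def)
qed

lemma genus_sum_minus_truncations_bigo:
  assumes "\<nu> \<ge> 2" "\<gamma> > 0"
  shows "(\<lambda>n. (\<Sum>g\<le>m. Zg P \<nu> g (\<gamma> * real n ^ (\<nu> - 1)) * inv_nroot \<nu> n ^ (2*g*\<nu>))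
            - (\<Sum>g\<le>m. (\<Sum>i\<le>trunc_deg \<nu> d g. acoef P \<nu> g \<gamma> i * inv_nroot \<nu> n ^ i) * inv_nroot \<nu> n ^ (2*g*\<nu>)))
           \<in> O(\<lambda>n. inv_nroot \<nu> n ^ (d + 1))"
proof -
  have "(\<lambda>n. \<Sum>g\<le>m. (Zg P \<nu> g (\<gamma> * real n ^ (\<nu> - 1))
            - (\<Sum>i\<le>trunc_deg \<nu> d g. acoef P \<nu> g \<gamma> i * inv_nroot \<nu> n ^ i)) * inv_nroot \<nu> n ^ (2*g*\<nu>))
        \<in> O(\<lambda>n. inv_nroot \<nu> n ^ (d + 1))"
  proof (intro big_sum_in_bigo)
    fix g
    have "(\<lambda>n. (Zg P \<nu> g (\<gamma> * real n ^ (\<nu> - 1))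
              - (\<Sum>i\<le>trunc_deg \<nu> d g. acoef P \<nu> g \<gamma> i * inv_nroot \<nu> n ^ i)) * inv_nroot \<nu> n ^ (2*g*\<nu>))
          \<in> O(\<lambda>n. inv_nroot \<nu> n ^ Suc (trunc_deg \<nu> d g) * inv_nroot \<nu> n ^ (2*g*\<nu>))"
      by (intro landau_o.big.mult_right Zg_minus_acoef_bigo assms)
    also have "(\<lambda>n. inv_nroot \<nu> n ^ Suc (trunc_deg \<nu> d g) * inv_nroot \<nu> n ^ (2*g*\<nu>))
        \<in> O(\<lambda>n. inv_nroot \<nu> n ^ (d + 1))"
      unfolding power_add[symmetric] by (intro power_inv_nroot_bigo trunc_deg_order assms(1))
    finally show "(\<lambda>n. (Zg P \<nu> g (\<gamma> * real n ^ (\<nu> - 1))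
              - (\<Sum>i\<le>trunc_deg \<nu> d g. acoef P \<nu> g \<gamma> i * inv_nroot \<nu> n ^ i)) * inv_nroot \<nu> n ^ (2*g*\<nu>))
          \<in> O(\<lambda>n. inv_nroot \<nu> n ^ (d + 1))" .
  qed
  then show ?thesis
    by (simp add: left_diff_distrib sum_subtractf)
qed

lemma genus_sum_minus_Gpart_bigo:
  assumes "\<nu> \<ge> 2" "\<gamma> > 0" "(d + 1 - \<nu>) div (2*\<nu>) \<le> m"
  shows "(\<lambda>n. \<alpha> * (\<Sum>g\<le>m. Zg P \<nu> g (\<gamma> * real n ^ (\<nu> - 1)) * inv_nroot \<nu> n ^ (2*g*\<nu>))
            - Gpart P \<nu> \<alpha> \<gamma> d n) \<in> O(\<lambda>n. inv_nroot \<nu> n ^ (d + 1))"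
proof -
  have "(\<lambda>n. \<alpha> * ((\<Sum>g\<le>m. Zg P \<nu> g (\<gamma> * real n ^ (\<nu> - 1)) * inv_nroot \<nu> n ^ (2*g*\<nu>))
      - (\<Sum>g\<le>m. (\<Sum>i\<le>trunc_deg \<nu> d g. acoef P \<nu> g \<gamma> i * inv_nroot \<nu> n ^ i) * inv_nroot \<nu> n ^ (2*g*\<nu>))))
      \<in> O(\<lambda>n. inv_nroot \<nu> n ^ (d + 1))"
    using genus_sum_minus_truncations_bigo[OF assms(1,2)] by (cases "\<alpha> = 0") simp_all
  moreover have "eventually (\<lambda>n. Gpart P \<nu> \<alpha> \<gamma> d n = \<alpha> * (\<Sum>g\<le>m.
      (\<Sum>i\<le>trunc_deg \<nu> d g. acoef P \<nu> g \<gamma> i * inv_nroot \<nu> n ^ i) * inv_nroot \<nu> n ^ (2*g*\<nu>))) sequentially"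
    using eventually_gt_at_top[of 0] by eventually_elim (rule Gpart_eq_truncations[OF assms])
  ultimately show ?thesis
    by (subst landau_o.big.in_cong) (auto elim!: eventually_mono simp: right_diff_distrib)
qed

theorem lemmaA4:
  fixes \<nu> :: nat and P :: "nat \<Rightarrow> real poly" and U :: "real set"
    and \<alpha> \<xi> :: real and d :: nat
  assumes "\<nu> \<ge> 2"
    and "\<forall>g\<ge>1. degree (P g) = 3*g - 2"
    and HG: "open U" "1 \<in> U"
      "\<forall>\<alpha>\<in>U. \<forall>m::nat. \<exists>K n0. \<forall>n::nat\<ge>n0. \<forall>r>0.
         \<bar>xrec \<nu> n (real n / \<alpha>) r - \<alpha> * (\<Sum>g\<le>m. Zg P \<nu> g (\<alpha>^(\<nu>-1) * r) / real n ^ (2*g))\<bar>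
           < K / real n ^ (2*m+2)"
    and "\<alpha> \<in> U" and "\<alpha> > 0" and "\<xi> > 0" and "d \<ge> \<nu> - 1"
  shows "\<exists>K n0. \<forall>n::nat\<ge>n0.
           \<bar>xrec \<nu> n (real n / \<alpha>) (real n ^ (\<nu>-1) / \<xi>) - Gpart P \<nu> \<alpha> (\<alpha>^(\<nu>-1) / \<xi>) d n\<bar>
             < K / real n powr ((real d + 1) / real \<nu>)"
proof -
  \<comment> \<open>Only (H_G) at \<alpha> with m = d is used.\<close>
  define \<gamma> where "\<gamma> = \<alpha>^(\<nu>-1) / \<xi>"
  have "\<gamma> > 0"
    using assms by (simp add: \<gamma>_def)
  obtain K n0 where HG_d: "\<forall>n\<ge>n0. \<forall>r>0. \<bar>xrec \<nu> n (real n / \<alpha>) r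
      - \<alpha> * (\<Sum>g\<le>d. Zg P \<nu> g (\<alpha>^(\<nu>-1) * r) / real n ^ (2*g))\<bar> < K / real n ^ (2*d+2)"
    using HG(3) \<open>\<alpha> \<in> U\<close> by blast
  have deg: "d + 1 \<le> \<nu> * (2*d + 2)"
    using mult_right_mono[of 1 \<nu> "2*d + 2"] assms(1) by simp
  have J_le: "(d + 1 - \<nu>) div (2*\<nu>) \<le> d"
    using div_le_dividend[of "d + 1 - \<nu>" "2*\<nu>"] assms(1) by linarith
  have "(\<lambda>n. xrec \<nu> n (real n / \<alpha>) (real n ^ (\<nu>-1) / \<xi>)
      - \<alpha> * (\<Sum>g\<le>d. Zg P \<nu> g (\<gamma> * real n ^ (\<nu>-1)) * inv_nroot \<nu> n ^ (2*g*\<nu>)))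
      \<in> O(\<lambda>n. inv_nroot \<nu> n ^ (d + 1))"
    unfolding \<gamma>_def by (rule xrec_minus_genus_sum_bigo[OF _ \<open>\<xi> > 0\<close> deg HG_d]) (use assms(1) in simp)
  from sum_in_bigo(1)[OF this genus_sum_minus_Gpart_bigo[OF assms(1) \<open>\<gamma> > 0\<close> J_le, of \<alpha> P]]
  have "(\<lambda>n. xrec \<nu> n (real n / \<alpha>) (real n ^ (\<nu>-1) / \<xi>) - Gpart P \<nu> \<alpha> \<gamma> d n)
      \<in> O(\<lambda>n. inv_nroot \<nu> n ^ (d + 1))"
    by simp
  from bigo_power_inv_nroot_imp_bound[OF this] show ?thesis
    by (simp add: \<gamma>_def add.commute)
qed

end
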